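(* Let $(\sigma_n)_{n\ge1}$ be complex numbers with $\liminf_{n\to\infty}(\operatorname{Re}\sigma_{n+1}-\operatorname{Re}\sigma_n)=\gamma>0$ and $(\operatorname{Im}\sigma_n)$ bounded. Then for every $\varepsilon\in(0,1)$ and every $T>\frac{\pi}{\gamma\sqrt{1-\varepsilon}}$ there exist a constant $c(T)>0$ (depending on $T$, $\varepsilon$ and $(\sigma_n)$) and $n_0=n_0(\varepsilon)\in\mathbb{N}$, both independent of $(F_n)$, with $n_0$ independent of $T$, such that for every complex sequence $(F_n)$ with $\sum|F_n|^2<\infty$, $$\int_{-\infty}^{\infty}k^*(t)\Big|\sum_{n=n_0}^\infty F_ne^{i\sigma_nt}+\overline{F_n}e^{-i\overline{\sigma_n}t}\Big|^2dt\le c(T)\sum_{n=n_0}^\infty|F_n|^2 .$$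
   Context: For $T>0$, $k^*(t):=\cos\big(\frac{\pi t}{2T}\big)$ for $|t|\le T$ and $k^*(t):=0$ for $|t|>T$. *)

theory Defs
  imports "HOL-Analysis.Analysis"
begin

definition kstar :: "real \<Rightarrow> real \<Rightarrow> real" where
  "kstar T t = (if \<bar>t\<bar> \<le> T then cos (pi * t / (2 * T)) else 0)"

end

theory Submission
  imports Defs
begin

text \<open>
  With \<open>a T = pi/2\<close>, expanding the square writes the integral over \<open>[-T, T]\<close> of
  \<open>cos (a t) |\<Sum>\<^sub>n c\<^sub>n exp (i \<mu>\<^sub>n t)|^2\<close> as the Hermitian form
  \<open>\<Sum>\<^sub>n\<^sub>,\<^sub>m c\<^sub>n cnj c\<^sub>m V (\<mu>\<^sub>n - cnj \<mu>\<^sub>m)\<close>, where \<open>V w = 2 a cos (w T) / (a^2 - w^2)\<close>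
  is the integral of \<open>cos (a t) exp (i w t)\<close>. For bounded \<open>Im w\<close> one has
  \<open>|V w| = O(1 / (1 + (Re w)^2))\<close>. If the \<open>Re \<mu>\<^sub>n\<close> are \<open>g\<close>-separated, each row sum of the matrix
  \<open>1 / (1 + (Re \<mu>\<^sub>n - Re \<mu>\<^sub>m)^2)\<close> is at most twice the convergent series
  \<open>\<Sum>\<^sub>j 1 / (1 + (j g)^2)\<close>, so Schur's test bounds the form by a constant times
  \<open>\<Sum>\<^sub>n |c\<^sub>n|^2\<close>: this is Ingham's upper inequality. The gap hypothesis makes the \<open>Re \<sigma>\<^sub>n\<close>
  \<open>\<gamma>/2\<close>-separated from some index on, the conjugate frequencies \<open>- cnj \<sigma>\<^sub>n\<close> satisfy the same
  hypotheses, and \<open>|u + v|^2 \<le> 2|u|^2 + 2|v|^2\<close> combines the two sums. The bound holds for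
  every \<open>T > 0\<close>; the restrictions on \<open>\<epsilon>\<close> and \<open>T\<close> only matter for the matching lower bound.
\<close>

definition cos_exp :: "real \<Rightarrow> complex \<Rightarrow> real \<Rightarrow> complex" where
  "cos_exp a w t = of_real (cos (a * t)) * exp (\<i> * w * of_real t)"

lemma continuous_on_cos_exp: "continuous_on A (cos_exp a w)"
  unfolding cos_exp_def by (intro continuous_intros)

lemma norm_cos_exp_le: "norm (cos_exp a w t) \<le> exp (\<bar>Im w\<bar> * \<bar>t\<bar>)"
proof -
  have "norm (cos_exp a w t) = \<bar>cos (a * t)\<bar> * exp (- Im w * t)"
    unfolding cos_exp_def by (simp add: norm_mult)
  also have "\<dots> \<le> 1 * exp (\<bar>Im w\<bar> * \<bar>t\<bar>)"
    by (intro mult_mono) (auto simp: abs_mult[symmetric] abs_le_iff)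
  finally show ?thesis by simp
qed

lemma norm_integral_cos_exp_le:
  assumes "T \<ge> 0"
  shows "norm (integral {-T..T} (cos_exp a w)) \<le> 2 * T * exp (\<bar>Im w\<bar> * T)"
proof -
  have "(cos_exp a w has_integral integral {-T..T} (cos_exp a w)) {-T..T}"
    by (intro integrable_integral integrable_continuous_interval continuous_on_cos_exp)
  moreover have "norm (cos_exp a w t) \<le> exp (\<bar>Im w\<bar> * T)" if "t \<in> {-T..T}" for t
  proof -
    have "\<bar>Im w\<bar> * \<bar>t\<bar> \<le> \<bar>Im w\<bar> * T"
      using that by (intro mult_left_mono) auto
    then show ?thesis using norm_cos_exp_le[of a w t] by (meson exp_le_cancel_iff order_trans)
  qed
  ultimately have "norm (integral {-T..T} (cos_exp a w))
      \<le> exp (\<bar>Im w\<bar> * T) * Henstock_Kurzweil_Integration.content {-T..T}"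
    by (intro has_integral_bound_real[where S="{}"]) auto
  then show ?thesis using assms by (simp add: mult.commute)
qed

lemma integral_cos_exp:
  assumes T: "T > 0" and aT: "a * T = pi / 2" and nz: "(of_real a)\<^sup>2 \<noteq> w\<^sup>2"
  shows "integral {-T..T} (cos_exp a w)
    = 2 * of_real a * cos (w * of_real T) / ((of_real a)\<^sup>2 - w\<^sup>2)"
proof -
  define K where "K = inverse ((of_real a)\<^sup>2 - w\<^sup>2)"
  define G where "G z = K * exp (\<i> * w * z) * (\<i> * w * cos (of_real a * z) + of_real a * sin (of_real a * z))"
    for z
  have K: "K * ((of_real a)\<^sup>2 - w\<^sup>2) = 1"
    using nz unfolding K_def by simp
  have "(G has_field_derivative K * ((of_real a)\<^sup>2 - w\<^sup>2) * (exp (\<i> * w * z) * cos (of_real a * z))) (at z)"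
    for z
    unfolding G_def
    by (rule derivative_eq_intros refl | simp)+ (simp add: algebra_simps power2_eq_square)
  then have "((\<lambda>t. G (of_real t)) has_vector_derivative cos_exp a w t) (at t within {-T..T})" for t
    using has_vector_derivative_real_field
    by (fastforce simp: K cos_exp_def cos_of_real[symmetric] mult.commute)
  then have "(cos_exp a w has_integral (G (of_real T) - G (of_real (-T)))) {-T..T}"
    using T by (intro fundamental_theorem_of_calculus) auto
  then have "integral {-T..T} (cos_exp a w) = G (of_real T) - G (of_real (-T))"
    by (rule integral_unique)
  also have "\<dots> = K * of_real a * (exp (\<i> * w * of_real T) + exp (- (\<i> * w * of_real T)))"
  proof -
    have "cos (of_real a * of_real T) = (0::complex)" "sin (of_real a * of_real T) = (1::complex)"
      using aT by (metis cos_of_real of_real_mult cos_pi_half of_real_0,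
                   metis sin_of_real of_real_mult sin_pi_half of_real_1)
    then show ?thesis unfolding G_def by (simp add: algebra_simps)
  qed
  also have "\<dots> = 2 * of_real a * cos (w * of_real T) / ((of_real a)\<^sup>2 - w\<^sup>2)"
    using nz unfolding K_def by (simp add: cos_exp_eq field_simps)
  finally show ?thesis .
qed

lemma norm_cos_le_exp_abs_Im: "norm (cos z) \<le> exp \<bar>Im z\<bar>"
proof -
  have "norm (cos z) = norm (exp (\<i> * z) + exp (- (\<i> * z))) / 2"
    by (simp add: cos_exp_eq norm_divide)
  also have "\<dots> \<le> (exp (- Im z) + exp (Im z)) / 2"
    using norm_triangle_ineq[of "exp (\<i> * z)" "exp (- (\<i> * z))"] by simp
  also have "\<dots> \<le> exp \<bar>Im z\<bar>"
    by (cases "Im z \<ge> 0") auto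
  finally show ?thesis .
qed

lemma norm_integral_cos_exp_le_Re:
  assumes T: "T > 0" and aT: "a * T = pi / 2" and Re_w: "Re w \<noteq> 0" "2 * a\<^sup>2 \<le> (Re w)\<^sup>2"
  shows "norm (integral {-T..T} (cos_exp a w)) \<le> 4 * a * exp (\<bar>Im w\<bar> * T) / (Re w)\<^sup>2"
proof -
  have a: "a > 0"
    using aT T by (metis pi_half_gt_zero zero_less_mult_pos2)
  have "(Re w)\<^sup>2 \<le> (cmod w)\<^sup>2"
    using abs_Re_le_cmod by (metis abs_ge_zero power2_abs power_mono)
  moreover have "cmod (w\<^sup>2) - cmod ((of_real a)\<^sup>2) \<le> cmod ((of_real a)\<^sup>2 - w\<^sup>2)"
    by (metis norm_minus_commute norm_triangle_ineq2)
  ultimately have denom: "(Re w)\<^sup>2 / 2 \<le> cmod ((of_real a)\<^sup>2 - w\<^sup>2)"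
    using Re_w by (simp add: norm_power)
  then have nz: "(of_real a)\<^sup>2 \<noteq> w\<^sup>2"
    using Re_w by auto
  have "norm (integral {-T..T} (cos_exp a w))
      = 2 * a * cmod (cos (w * of_real T)) / cmod ((of_real a)\<^sup>2 - w\<^sup>2)"
    unfolding integral_cos_exp[OF T aT nz] using a by (simp add: norm_divide norm_mult)
  also have "\<dots> \<le> 2 * a * exp (\<bar>Im w\<bar> * T) / ((Re w)\<^sup>2 / 2)"
  proof (intro frac_le mult_left_mono)
    show "cmod (cos (w * of_real T)) \<le> exp (\<bar>Im w\<bar> * T)"
      using norm_cos_le_exp_abs_Im[of "w * of_real T"] T by (simp add: abs_mult)
  qed (use a denom Re_w in auto)
  finally show ?thesis by simp
qed

text \<open>The closed form gives the decay for large \<open>\<bar>Re w\<bar>\<close>, the trivial bound covers the rest.\<close>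
lemma norm_integral_cos_exp_decay:
  assumes T: "T > 0" and aT: "a * T = pi / 2" and Im_w: "\<bar>Im w\<bar> \<le> \<beta>"
  shows "norm (integral {-T..T} (cos_exp a w))
    \<le> exp (\<beta> * T) * (8 * a + 2 * T * (1 + max (2 * a\<^sup>2) 1)) / (1 + (Re w)\<^sup>2)"
proof -
  define R where "R = max (2 * a\<^sup>2) 1"
  define E where "E = exp (\<beta> * T)"
  have a: "a > 0"
    using aT T by (metis pi_half_gt_zero zero_less_mult_pos2)
  have E: "exp (\<bar>Im w\<bar> * T) \<le> E" "E > 0"
    unfolding E_def using Im_w T by (simp_all add: mult_right_mono)
  have denom: "1 + (Re w)\<^sup>2 > 0"
    by (simp add: add_pos_nonneg)
  have "norm (integral {-T..T} (cos_exp a w)) \<le> E * (8 * a + 2 * T * (1 + R)) / (1 + (Re w)\<^sup>2)"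
  proof (cases "R \<le> (Re w)\<^sup>2")
    case True
    then have Re_w: "1 \<le> (Re w)\<^sup>2" "2 * a\<^sup>2 \<le> (Re w)\<^sup>2"
      unfolding R_def by auto
    have "norm (integral {-T..T} (cos_exp a w)) \<le> 4 * a * exp (\<bar>Im w\<bar> * T) / (Re w)\<^sup>2"
      using Re_w by (intro norm_integral_cos_exp_le_Re[OF T aT]) auto
    also have "\<dots> \<le> 4 * a * E / (Re w)\<^sup>2"
      using a E by (intro divide_right_mono mult_left_mono) auto
    also have "\<dots> \<le> 8 * a * E / (1 + (Re w)\<^sup>2)"
    proof -
      have "4 * a * E * (1 + (Re w)\<^sup>2) \<le> 4 * a * E * (2 * (Re w)\<^sup>2)"
        using Re_w a E by (intro mult_left_mono) auto
      moreover have "0 < (Re w)\<^sup>2"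
        using Re_w by linarith
      ultimately show ?thesis
        using denom by (simp add: divide_simps)
    qed
    also have "\<dots> \<le> E * (8 * a + 2 * T * (1 + R)) / (1 + (Re w)\<^sup>2)"
      using T E R_def by (intro divide_right_mono) (auto simp: distrib_left)
    finally show ?thesis .
  next
    case False
    have "norm (integral {-T..T} (cos_exp a w)) \<le> 2 * T * exp (\<bar>Im w\<bar> * T)"
      using T by (intro norm_integral_cos_exp_le) auto
    also have "\<dots> \<le> 2 * T * E"
      using T E by (intro mult_left_mono) auto
    also have "\<dots> \<le> 2 * T * E * (1 + R) / (1 + (Re w)\<^sup>2)"
    proof -
      have "2 * T * E * (1 + (Re w)\<^sup>2) \<le> 2 * T * E * (1 + R)"
        using False T E by (intro mult_left_mono) auto
      then show ?thesis
        using denom by (simp add: le_divide_eq)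
    qed
    also have "\<dots> \<le> E * (8 * a + 2 * T * (1 + R)) / (1 + (Re w)\<^sup>2)"
      using a E by (intro divide_right_mono) (auto simp: distrib_left)
    finally show ?thesis .
  qed
  then show ?thesis
    unfolding R_def E_def .
qed

definition separated :: "real \<Rightarrow> 'a set \<Rightarrow> ('a \<Rightarrow> real) \<Rightarrow> bool" where
  "separated g S r \<longleftrightarrow> (\<forall>n\<in>S. \<forall>m\<in>S. n \<noteq> m \<longrightarrow> g \<le> \<bar>r n - r m\<bar>)"

lemma separated_subset: "separated g S r \<Longrightarrow> S' \<subseteq> S \<Longrightarrow> separated g S' r"
  unfolding separated_def by blast

lemma summable_inverse_one_plus_sq:
  assumes g: "g > 0"
  shows "summable (\<lambda>j::nat. 1 / (1 + (real j * g)\<^sup>2))"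
proof (rule summable_comparison_test'[where N=1])
  show "summable (\<lambda>j::nat. 1 / g\<^sup>2 * inverse (real j ^ 2))"
    by (intro summable_mult inverse_power_summable) auto
  fix j :: nat assume "j \<ge> 1"
  then show "norm (1 / (1 + (real j * g)\<^sup>2)) \<le> 1 / g\<^sup>2 * inverse (real j ^ 2)"
    using g by (simp add: field_simps power_mult_distrib add_pos_nonneg)
qed

text \<open>The points \<open>r m \<ge> x\<close> lie in distinct cells \<open>[x + j g, x + (j+1) g)\<close>.\<close>
lemma sum_separated_above_le:
  assumes fin: "finite S" and g: "g > 0" and sep: "separated g S r"
  shows "(\<Sum>m\<in>{m\<in>S. x \<le> r m}. 1 / (1 + (x - r m)\<^sup>2)) \<le> (\<Sum>j. 1 / (1 + (real j * g)\<^sup>2))"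
proof -
  define A where "A = {m\<in>S. x \<le> r m}"
  define cell where "cell m = nat \<lfloor>(r m - x) / g\<rfloor>" for m
  have cell_le: "real (cell m) * g \<le> r m - x" if "m \<in> A" for m
  proof -
    have "real (cell m) \<le> (r m - x) / g"
      using that g unfolding A_def cell_def by auto
    then show ?thesis using g by (simp add: field_simps)
  qed
  have "inj_on cell A"
  proof (rule inj_onI, rule ccontr)
    fix m m' assume m: "m \<in> A" "m' \<in> A" "cell m = cell m'" "m \<noteq> m'"
    have "(r m - x) / g \<ge> 0" "(r m' - x) / g \<ge> 0"
      using m g unfolding A_def by auto
    then have "\<lfloor>(r m - x) / g\<rfloor> = \<lfloor>(r m' - x) / g\<rfloor>"
      using m(3) unfolding cell_def by (metis floor_less_zero nat_eq_iff2 not_less)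
    then have "\<bar>(r m - x) / g - (r m' - x) / g\<bar> < 1"
      by linarith
    then have "\<bar>r m - r m'\<bar> < g"
      using g by (simp add: field_simps flip: diff_divide_distrib)
    moreover have "g \<le> \<bar>r m - r m'\<bar>"
      using sep m unfolding A_def separated_def by auto
    ultimately show False by simp
  qed
  have "(\<Sum>m\<in>A. 1 / (1 + (x - r m)\<^sup>2)) \<le> (\<Sum>m\<in>A. 1 / (1 + (real (cell m) * g)\<^sup>2))"
  proof (rule sum_mono)
    fix m assume "m \<in> A"
    then have "(real (cell m) * g)\<^sup>2 \<le> (x - r m)\<^sup>2"
      using cell_le g by (subst power2_commute) (intro power_mono, auto)
    then show "1 / (1 + (x - r m)\<^sup>2) \<le> 1 / (1 + (real (cell m) * g)\<^sup>2)"
      by (intro divide_left_mono) (auto simp: add_pos_nonneg)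
  qed
  also have "\<dots> = (\<Sum>j\<in>cell ` A. 1 / (1 + (real j * g)\<^sup>2))"
    using \<open>inj_on cell A\<close> by (simp add: sum.reindex)
  also have "\<dots> \<le> (\<Sum>j. 1 / (1 + (real j * g)\<^sup>2))"
    using fin summable_inverse_one_plus_sq[OF g] unfolding A_def
    by (intro sum_le_suminf) (auto simp: add_pos_nonneg)
  finally show ?thesis unfolding A_def .
qed

lemma sum_separated_le:
  assumes fin: "finite S" and g: "g > 0" and sep: "separated g S r"
  shows "(\<Sum>m\<in>S. 1 / (1 + (x - r m)\<^sup>2)) \<le> 2 * (\<Sum>j. 1 / (1 + (real j * g)\<^sup>2))"
proof -
  let ?f = "\<lambda>m. 1 / (1 + (x - r m)\<^sup>2)"
  define A where "A = {m\<in>S. x \<le> r m}"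
  define B where "B = {m\<in>S. - x \<le> - r m}"
  have "sum ?f S = sum ?f A + sum ?f (S - A)"
    using fin unfolding A_def by (metis (no_types, lifting) add.commute mem_Collect_eq subsetI sum.subset_diff)
  also have "sum ?f (S - A) \<le> sum ?f B"
    using fin unfolding A_def B_def by (intro sum_mono2) (auto simp: add_pos_nonneg)
  also have "sum ?f B = (\<Sum>m\<in>B. 1 / (1 + (- x - (- r m))\<^sup>2))"
    by (simp add: power2_commute)
  also have "\<dots> \<le> (\<Sum>j. 1 / (1 + (real j * g)\<^sup>2))"
    using sep unfolding B_def
    by (intro sum_separated_above_le[OF fin g]) (auto simp: separated_def abs_minus_commute)
  also have "sum ?f A \<le> (\<Sum>j. 1 / (1 + (real j * g)\<^sup>2))"
    unfolding A_def by (rule sum_separated_above_le[OF fin g sep])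
  finally show ?thesis by linarith
qed

lemma schur_test_sum:
  fixes u :: "'a \<Rightarrow> real" and M :: "'a \<Rightarrow> 'a \<Rightarrow> real"
  assumes sym: "\<And>n m. M n m = M m n" and M_nonneg: "\<And>n m. M n m \<ge> 0"
    and row: "\<And>n. n \<in> S \<Longrightarrow> (\<Sum>m\<in>S. M n m) \<le> C"
  shows "(\<Sum>n\<in>S. \<Sum>m\<in>S. \<bar>u n\<bar> * \<bar>u m\<bar> * M n m) \<le> C * (\<Sum>n\<in>S. (u n)\<^sup>2)"
proof -
  have "(\<Sum>n\<in>S. \<Sum>m\<in>S. \<bar>u n\<bar> * \<bar>u m\<bar> * M n m)
      \<le> (\<Sum>n\<in>S. \<Sum>m\<in>S. ((u n)\<^sup>2 / 2 + (u m)\<^sup>2 / 2) * M n m)"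
  proof (intro sum_mono mult_right_mono M_nonneg)
    fix n m
    show "\<bar>u n\<bar> * \<bar>u m\<bar> \<le> (u n)\<^sup>2 / 2 + (u m)\<^sup>2 / 2"
      using sum_squares_bound[of "\<bar>u n\<bar>" "\<bar>u m\<bar>"] by simp
  qed
  also have "\<dots> = (\<Sum>n\<in>S. \<Sum>m\<in>S. (u n)\<^sup>2 / 2 * M n m) + (\<Sum>n\<in>S. \<Sum>m\<in>S. (u m)\<^sup>2 / 2 * M n m)"
    by (simp add: distrib_right sum.distrib)
  also have "(\<Sum>n\<in>S. \<Sum>m\<in>S. (u m)\<^sup>2 / 2 * M n m) = (\<Sum>n\<in>S. \<Sum>m\<in>S. (u n)\<^sup>2 / 2 * M n m)"
    by (subst sum.swap) (simp add: sym)
  also have "(\<Sum>n\<in>S. \<Sum>m\<in>S. (u n)\<^sup>2 / 2 * M n m) = (\<Sum>n\<in>S. (u n)\<^sup>2 / 2 * (\<Sum>m\<in>S. M n m))"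
    by (simp add: sum_distrib_left)
  also have "\<dots> \<le> (\<Sum>n\<in>S. (u n)\<^sup>2 / 2 * C)"
    by (intro sum_mono mult_left_mono row) auto
  finally show ?thesis
    by (simp add: sum_distrib_left sum_distrib_right mult.commute)
qed

lemma norm_hermitian_form_le:
  fixes c :: "'a \<Rightarrow> complex" and V :: "'a \<Rightarrow> 'a \<Rightarrow> complex" and M :: "'a \<Rightarrow> 'a \<Rightarrow> real"
  assumes V: "\<And>n m. n \<in> S \<Longrightarrow> m \<in> S \<Longrightarrow> cmod (V n m) \<le> M n m"
    and sym: "\<And>n m. M n m = M m n" and M_nonneg: "\<And>n m. M n m \<ge> 0"
    and row: "\<And>n. n \<in> S \<Longrightarrow> (\<Sum>m\<in>S. M n m) \<le> C"
  shows "cmod (\<Sum>n\<in>S. \<Sum>m\<in>S. c n * cnj (c m) * V n m) \<le> C * (\<Sum>n\<in>S. (cmod (c n))\<^sup>2)"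
proof -
  have "cmod (\<Sum>n\<in>S. \<Sum>m\<in>S. c n * cnj (c m) * V n m)
      \<le> (\<Sum>n\<in>S. \<Sum>m\<in>S. \<bar>cmod (c n)\<bar> * \<bar>cmod (c m)\<bar> * M n m)"
    using V by (intro order_trans[OF norm_sum] sum_mono order_trans[OF norm_sum])
      (auto simp: norm_mult mult_left_mono)
  also have "\<dots> \<le> C * (\<Sum>n\<in>S. (cmod (c n))\<^sup>2)"
    using sym M_nonneg row by (rule schur_test_sum)
  finally show ?thesis .
qed

lemma cos_mult_norm_exp_sum_sq:
  fixes \<mu> c :: "'a \<Rightarrow> complex"
  shows "cos (a * t) * (cmod (\<Sum>n\<in>S. c n * exp (\<i> * \<mu> n * of_real t)))\<^sup>2
     = Re (\<Sum>n\<in>S. \<Sum>m\<in>S. c n * cnj (c m) * cos_exp a (\<mu> n - cnj (\<mu> m)) t)"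
proof -
  define e where "e n = exp (\<i> * \<mu> n * of_real t)" for n
  have e: "e n * cnj (e m) = exp (\<i> * (\<mu> n - cnj (\<mu> m)) * of_real t)" for n m
  proof -
    have "e n * cnj (e m) = exp (\<i> * \<mu> n * of_real t + cnj (\<i> * \<mu> m * of_real t))"
      unfolding e_def by (simp add: exp_cnj exp_add[symmetric])
    also have "\<i> * \<mu> n * of_real t + cnj (\<i> * \<mu> m * of_real t) = \<i> * (\<mu> n - cnj (\<mu> m)) * of_real t"
      by (simp add: algebra_simps)
    finally show ?thesis .
  qed
  have "(cmod (\<Sum>n\<in>S. c n * e n))\<^sup>2 = Re ((\<Sum>n\<in>S. c n * e n) * cnj (\<Sum>n\<in>S. c n * e n))"
    by (metis Re_complex_of_real complex_norm_square)
  also have "(\<Sum>n\<in>S. c n * e n) * cnj (\<Sum>n\<in>S. c n * e n)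
      = (\<Sum>n\<in>S. \<Sum>m\<in>S. c n * cnj (c m) * exp (\<i> * (\<mu> n - cnj (\<mu> m)) * of_real t))"
    unfolding e[symmetric] by (simp add: sum_product cnj_sum ac_simps)
  finally have "cos (a * t) * (cmod (\<Sum>n\<in>S. c n * e n))\<^sup>2
      = Re (of_real (cos (a * t)) * (\<Sum>n\<in>S. \<Sum>m\<in>S. c n * cnj (c m) * exp (\<i> * (\<mu> n - cnj (\<mu> m)) * of_real t)))"
    by simp
  also have "of_real (cos (a * t)) * (\<Sum>n\<in>S. \<Sum>m\<in>S. c n * cnj (c m) * exp (\<i> * (\<mu> n - cnj (\<mu> m)) * of_real t))
      = (\<Sum>n\<in>S. \<Sum>m\<in>S. c n * cnj (c m) * cos_exp a (\<mu> n - cnj (\<mu> m)) t)"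
    unfolding cos_exp_def by (simp add: sum_distrib_left ac_simps)
  finally show ?thesis
    unfolding e_def .
qed

lemma integral_cos_mult_norm_exp_sum_sq:
  fixes \<mu> c :: "'a \<Rightarrow> complex"
  assumes "finite S"
  shows "integral {-T..T} (\<lambda>t. cos (a * t) * (cmod (\<Sum>n\<in>S. c n * exp (\<i> * \<mu> n * of_real t)))\<^sup>2)
     = Re (\<Sum>n\<in>S. \<Sum>m\<in>S. c n * cnj (c m) * integral {-T..T} (cos_exp a (\<mu> n - cnj (\<mu> m))))"
proof -
  have "((\<lambda>t. \<Sum>n\<in>S. \<Sum>m\<in>S. c n * cnj (c m) * cos_exp a (\<mu> n - cnj (\<mu> m)) t) has_integral
      (\<Sum>n\<in>S. \<Sum>m\<in>S. c n * cnj (c m) * integral {-T..T} (cos_exp a (\<mu> n - cnj (\<mu> m))))) {-T..T}"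
    by (intro has_integral_sum assms has_integral_mult_right integrable_integral
        integrable_continuous_interval continuous_on_cos_exp)
  from has_integral_Re[OF this] show ?thesis
    unfolding cos_mult_norm_exp_sum_sq by (rule integral_unique)
qed

lemma integral_cos_mult_norm_exp_sum_sq_le:
  assumes T: "T > 0" and aT: "a * T = pi / 2" and g: "g > 0"
  obtains C where "C \<ge> 0"
    "\<And>(S :: 'a set) \<mu> c. finite S \<Longrightarrow> separated g S (\<lambda>n. Re (\<mu> n)) \<Longrightarrow> (\<forall>n\<in>S. \<bar>Im (\<mu> n)\<bar> \<le> B) \<Longrightarrow>
      integral {-T..T} (\<lambda>t. cos (a * t) * (cmod (\<Sum>n\<in>S. c n * exp (\<i> * \<mu> n * of_real t)))\<^sup>2)
        \<le> C * (\<Sum>n\<in>S. (cmod (c n))\<^sup>2)"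
proof -
  define K where "K = exp (2 * B * T) * (8 * a + 2 * T * (1 + max (2 * a\<^sup>2) 1))"
  define \<Psi> where "\<Psi> = (\<Sum>j. 1 / (1 + (real j * g)\<^sup>2))"
  have "a > 0"
    using aT T by (metis pi_half_gt_zero zero_less_mult_pos2)
  then have "K \<ge> 0"
    unfolding K_def using T by (intro mult_nonneg_nonneg add_nonneg_nonneg) auto
  have "\<Psi> \<ge> 0"
    unfolding \<Psi>_def using summable_inverse_one_plus_sq[OF g]
    by (intro suminf_nonneg) (auto simp: add_pos_nonneg)
  show ?thesis
  proof (rule that[of "2 * K * \<Psi>"])
    show "2 * K * \<Psi> \<ge> 0"
      using \<open>K \<ge> 0\<close> \<open>\<Psi> \<ge> 0\<close> by simp
    fix S :: "'a set" and \<mu> c :: "'a \<Rightarrow> complex"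
    assume fin: "finite S" and sep: "separated g S (\<lambda>n. Re (\<mu> n))"
      and Im_\<mu>: "\<forall>n\<in>S. \<bar>Im (\<mu> n)\<bar> \<le> B"
    define M where "M n m = K / (1 + (Re (\<mu> n) - Re (\<mu> m))\<^sup>2)" for n m
    have "integral {-T..T} (\<lambda>t. cos (a * t) * (cmod (\<Sum>n\<in>S. c n * exp (\<i> * \<mu> n * of_real t)))\<^sup>2)
        \<le> cmod (\<Sum>n\<in>S. \<Sum>m\<in>S. c n * cnj (c m) * integral {-T..T} (cos_exp a (\<mu> n - cnj (\<mu> m))))"
      unfolding integral_cos_mult_norm_exp_sum_sq[OF fin] by (rule complex_Re_le_cmod)
    also have "\<dots> \<le> 2 * K * \<Psi> * (\<Sum>n\<in>S. (cmod (c n))\<^sup>2)"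
    proof (rule norm_hermitian_form_le)
      show "cmod (integral {-T..T} (cos_exp a (\<mu> n - cnj (\<mu> m)))) \<le> M n m"
        if "n \<in> S" "m \<in> S" for n m
      proof -
        have "\<bar>Im (\<mu> n)\<bar> \<le> B" "\<bar>Im (\<mu> m)\<bar> \<le> B"
          using Im_\<mu> that by auto
        then have "\<bar>Im (\<mu> n) + Im (\<mu> m)\<bar> \<le> 2 * B"
          by arith
        then show ?thesis
          using norm_integral_cos_exp_decay[OF T aT, of "\<mu> n - cnj (\<mu> m)" "2 * B"]
          unfolding M_def K_def by simp
      qed
      show "M n m = M m n" for n m
        unfolding M_def by (simp add: power2_commute)
      show "M n m \<ge> 0" for n m
        unfolding M_def using \<open>K \<ge> 0\<close> by (simp add: add_pos_nonneg)
      show "(\<Sum>m\<in>S. M n m) \<le> 2 * K * \<Psi>" for n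
      proof -
        have "(\<Sum>m\<in>S. M n m) = K * (\<Sum>m\<in>S. 1 / (1 + (Re (\<mu> n) - Re (\<mu> m))\<^sup>2))"
          unfolding M_def by (simp add: sum_distrib_left)
        also have "\<dots> \<le> K * (2 * \<Psi>)"
          unfolding \<Psi>_def using \<open>K \<ge> 0\<close> by (intro mult_left_mono sum_separated_le[OF fin g sep])
        finally show ?thesis by simp
      qed
    qed
    finally show "integral {-T..T} (\<lambda>t. cos (a * t) * (cmod (\<Sum>n\<in>S. c n * exp (\<i> * \<mu> n * of_real t)))\<^sup>2)
        \<le> 2 * K * \<Psi> * (\<Sum>n\<in>S. (cmod (c n))\<^sup>2)" .
  qed
qed

lemma lebesgue_integral_kstar_mult:
  assumes "continuous_on {-T..T} f"
  shows "(LINT t|lborel. kstar T t * f t) = integral {-T..T} (\<lambda>t. cos (pi * t / (2 * T)) * f t)"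
proof -
  have "(\<lambda>t. kstar T t * f t) = (\<lambda>t. indicator {-T..T} t *\<^sub>R (cos (pi * t / (2 * T)) * f t))"
    unfolding kstar_def by (auto simp: fun_eq_iff indicator_def abs_le_iff)
  moreover have "continuous_on {-T..T} (\<lambda>t. cos (pi / (2 * T) * t) * f t)"
    by (intro continuous_intros assms)
  then have "continuous_on {-T..T} (\<lambda>t. cos (pi * t / (2 * T)) * f t)"
    by simp
  note set_borel_integral_eq_integral(2)[OF borel_integrable_atLeastAtMost'[OF this]]
  ultimately show ?thesis
    unfolding set_lebesgue_integral_def by simp
qed

lemma integral_weighted_norm_add_sq_le:
  fixes f1 f2 :: "real \<Rightarrow> complex"
  assumes cont: "continuous_on {a..b} w" "continuous_on {a..b} f1" "continuous_on {a..b} f2"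
    and w_nonneg: "\<And>t. t \<in> {a..b} \<Longrightarrow> w t \<ge> 0"
  shows "integral {a..b} (\<lambda>t. w t * (cmod (f1 t + f2 t))\<^sup>2)
    \<le> 2 * integral {a..b} (\<lambda>t. w t * (cmod (f1 t))\<^sup>2) + 2 * integral {a..b} (\<lambda>t. w t * (cmod (f2 t))\<^sup>2)"
proof -
  have int: "(\<lambda>t. w t * (cmod (f t))\<^sup>2) integrable_on {a..b}" if "continuous_on {a..b} f" for f
    using cont that by (intro integrable_continuous_interval continuous_intros)
  have "integral {a..b} (\<lambda>t. w t * (cmod (f1 t + f2 t))\<^sup>2)
      \<le> integral {a..b} (\<lambda>t. 2 * (w t * (cmod (f1 t))\<^sup>2) + 2 * (w t * (cmod (f2 t))\<^sup>2))"
  proof (rule integral_le)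
    show "(\<lambda>t. w t * (cmod (f1 t + f2 t))\<^sup>2) integrable_on {a..b}"
      using cont by (intro int continuous_intros)
    show "(\<lambda>t. 2 * (w t * (cmod (f1 t))\<^sup>2) + 2 * (w t * (cmod (f2 t))\<^sup>2)) integrable_on {a..b}"
      using cont by (intro integrable_add integrable_on_mult_right int)
    fix t assume t: "t \<in> {a..b}"
    have "(cmod (f1 t + f2 t))\<^sup>2 \<le> (cmod (f1 t) + cmod (f2 t))\<^sup>2"
      by (intro power_mono norm_triangle_ineq) auto
    also have "\<dots> \<le> 2 * (cmod (f1 t))\<^sup>2 + 2 * (cmod (f2 t))\<^sup>2"
      using sum_squares_bound[of "cmod (f1 t)" "cmod (f2 t)"] by (simp add: power2_sum)
    finally show "w t * (cmod (f1 t + f2 t))\<^sup>2 \<le> 2 * (w t * (cmod (f1 t))\<^sup>2) + 2 * (w t * (cmod (f2 t))\<^sup>2)"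
      using mult_left_mono w_nonneg[OF t] by (fastforce simp: distrib_left mult.left_commute)
  qed
  also have "\<dots> = 2 * integral {a..b} (\<lambda>t. w t * (cmod (f1 t))\<^sup>2) + 2 * integral {a..b} (\<lambda>t. w t * (cmod (f2 t))\<^sup>2)"
    using cont by (simp add: integral_add integrable_on_mult_right int)
  finally show ?thesis .
qed

lemma kstar_integral_conj_pair_sum_le:
  assumes T: "T > 0" and g: "g > 0"
  obtains C where "C \<ge> 0"
    "\<And>(S :: 'a set) \<sigma> F. finite S \<Longrightarrow> separated g S (\<lambda>n. Re (\<sigma> n)) \<Longrightarrow> (\<forall>n\<in>S. \<bar>Im (\<sigma> n)\<bar> \<le> B) \<Longrightarrow>
      (LINT t|lborel. kstar T t * (cmod (\<Sum>n\<in>S. F n * exp (\<i> * \<sigma> n * of_real t)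
                                   + cnj (F n) * exp (- \<i> * cnj (\<sigma> n) * of_real t)))\<^sup>2)
        \<le> C * (\<Sum>n\<in>S. (cmod (F n))\<^sup>2)"
proof -
  define a where "a = pi / (2 * T)"
  have a: "a > 0" and aT: "a * T = pi / 2"
    unfolding a_def using T by simp_all
  obtain C where "C \<ge> 0" and C: "\<And>(S :: 'a set) \<mu> c. finite S \<Longrightarrow> separated g S (\<lambda>n. Re (\<mu> n)) \<Longrightarrow>
      (\<forall>n\<in>S. \<bar>Im (\<mu> n)\<bar> \<le> B) \<Longrightarrow>
      integral {-T..T} (\<lambda>t. cos (a * t) * (cmod (\<Sum>n\<in>S. c n * exp (\<i> * \<mu> n * of_real t)))\<^sup>2)
        \<le> C * (\<Sum>n\<in>S. (cmod (c n))\<^sup>2)"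
    by (rule integral_cos_mult_norm_exp_sum_sq_le[where 'a = 'a and B = B, OF T aT g]) blast
  have cos_nonneg: "cos (a * t) \<ge> 0" if "t \<in> {-T..T}" for t
  proof (rule cos_ge_zero)
    have "\<bar>a * t\<bar> \<le> a * T"
      using that a by (simp add: abs_mult abs_le_iff mult_left_mono)
    then show "- (pi / 2) \<le> a * t" "a * t \<le> pi / 2"
      using aT by (auto simp: abs_le_iff)
  qed
  show ?thesis
  proof (rule that[of "4 * C"])
    show "4 * C \<ge> 0"
      using \<open>C \<ge> 0\<close> by simp
    fix S :: "'a set" and \<sigma> F :: "'a \<Rightarrow> complex"
    assume fin: "finite S" and sep: "separated g S (\<lambda>n. Re (\<sigma> n))"
      and Im_\<sigma>: "\<forall>n\<in>S. \<bar>Im (\<sigma> n)\<bar> \<le> B"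
    define f1 where "f1 t = (\<Sum>n\<in>S. F n * exp (\<i> * \<sigma> n * of_real t))" for t
    define f2 where "f2 t = (\<Sum>n\<in>S. cnj (F n) * exp (\<i> * (- cnj (\<sigma> n)) * of_real t))" for t
    have sum_eq: "(\<Sum>n\<in>S. F n * exp (\<i> * \<sigma> n * of_real t) + cnj (F n) * exp (- \<i> * cnj (\<sigma> n) * of_real t))
        = f1 t + f2 t" for t
      unfolding f1_def f2_def by (simp add: sum.distrib)
    have cont: "continuous_on {-T..T} f1" "continuous_on {-T..T} f2"
      unfolding f1_def f2_def by (intro continuous_intros)+
    then have "continuous_on {-T..T} (\<lambda>t. (cmod (f1 t + f2 t))\<^sup>2)"
      by (intro continuous_intros)
    then have "(LINT t|lborel. kstar T t * (cmod (f1 t + f2 t))\<^sup>2)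
        = integral {-T..T} (\<lambda>t. cos (a * t) * (cmod (f1 t + f2 t))\<^sup>2)"
      by (simp add: lebesgue_integral_kstar_mult a_def)
    also have "\<dots> \<le> 2 * integral {-T..T} (\<lambda>t. cos (a * t) * (cmod (f1 t))\<^sup>2)
        + 2 * integral {-T..T} (\<lambda>t. cos (a * t) * (cmod (f2 t))\<^sup>2)"
      using cont cos_nonneg by (intro integral_weighted_norm_add_sq_le continuous_intros)
    finally have "(LINT t|lborel. kstar T t * (cmod (f1 t + f2 t))\<^sup>2)
        \<le> 2 * integral {-T..T} (\<lambda>t. cos (a * t) * (cmod (f1 t))\<^sup>2)
          + 2 * integral {-T..T} (\<lambda>t. cos (a * t) * (cmod (f2 t))\<^sup>2)" .
    moreover have "integral {-T..T} (\<lambda>t. cos (a * t) * (cmod (f1 t))\<^sup>2) \<le> C * (\<Sum>n\<in>S. (cmod (F n))\<^sup>2)"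
      unfolding f1_def using fin sep Im_\<sigma> by (rule C)
    moreover have "integral {-T..T} (\<lambda>t. cos (a * t) * (cmod (f2 t))\<^sup>2) \<le> C * (\<Sum>n\<in>S. (cmod (F n))\<^sup>2)"
      using C[OF fin, of "\<lambda>n. - cnj (\<sigma> n)" "\<lambda>n. cnj (F n)"] sep Im_\<sigma>
      unfolding f2_def separated_def by (simp add: abs_minus_commute)
    ultimately show "(LINT t|lborel. kstar T t * (cmod (\<Sum>n\<in>S. F n * exp (\<i> * \<sigma> n * of_real t)
        + cnj (F n) * exp (- \<i> * cnj (\<sigma> n) * of_real t)))\<^sup>2) \<le> 4 * C * (\<Sum>n\<in>S. (cmod (F n))\<^sup>2)"
      unfolding sum_eq by linarith
  qed
qed

lemma separated_of_liminf_gap: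
  fixes r :: "nat \<Rightarrow> real"
  assumes gap: "ereal g < liminf (\<lambda>n. ereal (r (Suc n) - r n))" and g: "g \<ge> 0"
  obtains n0 where "separated g {n0..} r"
proof -
  obtain n0 where n0: "\<And>n. n \<ge> n0 \<Longrightarrow> g < r (Suc n) - r n"
    using less_LiminfD[OF gap] unfolding eventually_sequentially by auto
  have gap_le_diff: "g \<le> r q - r p" if "n0 \<le> p" "Suc p \<le> q" for p q
    using \<open>Suc p \<le> q\<close>
  proof (induction q rule: dec_induct)
    case base
    show ?case using n0[OF \<open>n0 \<le> p\<close>] by simp
  next
    case (step q)
    then show ?case using n0[of q] \<open>n0 \<le> p\<close> g by simp
  qed
  have "separated g {n0..} r"
    unfolding separated_def
  proof (intro ballI impI)
    fix n m assume nm: "n \<in> {n0..}" "m \<in> {n0..}" "n \<noteq> m"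
    show "g \<le> \<bar>r n - r m\<bar>"
    proof (cases "n < m")
      case True
      then have "g \<le> r m - r n"
        using gap_le_diff[of n m] nm by simp
      then show ?thesis by linarith
    next
      case False
      then have "g \<le> r n - r m"
        using gap_le_diff[of m n] nm by simp
      then show ?thesis by linarith
    qed
  qed
  then show ?thesis by (rule that)
qed

lemma sum_atLeastAtMost_le_suminf_shift:
  fixes f :: "nat \<Rightarrow> real"
  assumes "summable f" "\<And>n. f n \<ge> 0"
  shows "(\<Sum>n=k..N. f n) \<le> (\<Sum>n. f (n + k))"
proof (cases "k \<le> N")
  case True
  have "(\<Sum>n=k..N. f n) = (\<Sum>i=0..N-k. f (i + k))"
    using sum.shift_bounds_cl_nat_ivl[of f 0 k "N - k"] True by simp
  also have "\<dots> \<le> (\<Sum>n. f (n + k))"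
    using assms summable_iff_shift[of f k] by (intro sum_le_suminf) auto
  finally show ?thesis .
next
  case False
  then show ?thesis
    using assms summable_iff_shift[of f k] by (simp add: suminf_nonneg)
qed

lemma kstar_integral_conj_pair_partial_sums_le:
  fixes \<sigma> :: "nat \<Rightarrow> complex"
  assumes T: "T > 0" and g: "g > 0" and sep: "separated g {n0..} (\<lambda>n. Re (\<sigma> n))"
    and Im_\<sigma>: "\<And>n. \<bar>Im (\<sigma> n)\<bar> \<le> B"
  shows "\<exists>c>0. \<forall>F :: nat \<Rightarrow> complex. summable (\<lambda>n. (cmod (F n))\<^sup>2) \<longrightarrow>
           (\<forall>N. (LINT t|lborel. kstar T t *
                 (cmod (\<Sum>n=n0..N. F n * exp (\<i> * \<sigma> n * complex_of_real t)
                        + cnj (F n) * exp (- \<i> * cnj (\<sigma> n) * complex_of_real t)))\<^sup>2)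
               \<le> c * (\<Sum>n. (cmod (F (n + n0)))\<^sup>2))"
proof -
  obtain C where "C \<ge> 0" and C: "\<And>(S :: nat set) \<sigma> F. finite S \<Longrightarrow> separated g S (\<lambda>n. Re (\<sigma> n)) \<Longrightarrow>
      (\<forall>n\<in>S. \<bar>Im (\<sigma> n)\<bar> \<le> B) \<Longrightarrow>
      (LINT t|lborel. kstar T t * (cmod (\<Sum>n\<in>S. F n * exp (\<i> * \<sigma> n * of_real t)
                                   + cnj (F n) * exp (- \<i> * cnj (\<sigma> n) * of_real t)))\<^sup>2)
        \<le> C * (\<Sum>n\<in>S. (cmod (F n))\<^sup>2)"
    by (rule kstar_integral_conj_pair_sum_le[where 'a = nat and B = B, OF T g]) blast
  show ?thesis
  proof (intro exI[of _ "C + 1"] conjI allI impI)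
    show "C + 1 > 0"
      using \<open>C \<ge> 0\<close> by simp
    fix F :: "nat \<Rightarrow> complex" and N
    assume "summable (\<lambda>n. (cmod (F n))\<^sup>2)"
    then have tail: "(\<Sum>n=n0..N. (cmod (F n))\<^sup>2) \<le> (\<Sum>n. (cmod (F (n + n0)))\<^sup>2)"
      by (rule sum_atLeastAtMost_le_suminf_shift) simp
    have "(LINT t|lborel. kstar T t *
               (cmod (\<Sum>n=n0..N. F n * exp (\<i> * \<sigma> n * complex_of_real t)
                      + cnj (F n) * exp (- \<i> * cnj (\<sigma> n) * complex_of_real t)))\<^sup>2)
        \<le> C * (\<Sum>n=n0..N. (cmod (F n))\<^sup>2)"
      using Im_\<sigma> separated_subset[OF sep] by (intro C) auto
    also have "\<dots> \<le> (C + 1) * (\<Sum>n. (cmod (F (n + n0)))\<^sup>2)"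
      using tail \<open>C \<ge> 0\<close> by (intro mult_mono) (auto intro: sum_nonneg)
    finally show "(LINT t|lborel. kstar T t *
               (cmod (\<Sum>n=n0..N. F n * exp (\<i> * \<sigma> n * complex_of_real t)
                      + cnj (F n) * exp (- \<i> * cnj (\<sigma> n) * complex_of_real t)))\<^sup>2)
        \<le> (C + 1) * (\<Sum>n. (cmod (F (n + n0)))\<^sup>2)" .
  qed
qed

theorem proposition5p12:
  fixes \<sigma> :: "nat \<Rightarrow> complex" and \<gamma> :: real
  assumes gap: "liminf (\<lambda>n. ereal (Re (\<sigma> (Suc n)) - Re (\<sigma> n))) = ereal \<gamma>"
    and gpos: "\<gamma> > 0"
    and bdd: "bounded (range (\<lambda>n. Im (\<sigma> n)))"
  shows "\<forall>\<epsilon>. 0 < \<epsilon> \<and> \<epsilon> < 1 \<longrightarrow>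
    (\<exists>n0::nat. n0 \<ge> 1 \<and>
      (\<forall>T. T > pi / (\<gamma> * sqrt (1 - \<epsilon>)) \<longrightarrow>
        (\<exists>c>0. \<forall>F :: nat \<Rightarrow> complex. summable (\<lambda>n. (cmod (F n))\<^sup>2) \<longrightarrow>
           (\<forall>N. (LINT t|lborel. kstar T t *
                 (cmod (\<Sum>n=n0..N. F n * exp (\<i> * \<sigma> n * complex_of_real t)
                        + cnj (F n) * exp (- \<i> * cnj (\<sigma> n) * complex_of_real t)))\<^sup>2)
               \<le> c * (\<Sum>n. (cmod (F (n + n0)))\<^sup>2)))))"
proof -
  obtain B where B: "\<And>n. \<bar>Im (\<sigma> n)\<bar> \<le> B"
    using bdd unfolding bounded_iff by auto
  have g: "\<gamma> / 2 > 0"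
    using gpos by simp
  have "ereal (\<gamma> / 2) < liminf (\<lambda>n. ereal (Re (\<sigma> (Suc n)) - Re (\<sigma> n)))"
    using gap gpos by simp
  then obtain n0 where "separated (\<gamma> / 2) {n0..} (\<lambda>n. Re (\<sigma> n))"
    using g by (elim separated_of_liminf_gap) auto
  then have sep: "separated (\<gamma> / 2) {Suc n0..} (\<lambda>n. Re (\<sigma> n))"
    by (rule separated_subset) auto
  show ?thesis
  proof (intro allI impI exI[of _ "Suc n0"] conjI
      kstar_integral_conj_pair_partial_sums_le[OF _ g sep B])
    fix \<epsilon> T :: real
    assume "0 < \<epsilon> \<and> \<epsilon> < 1" and "T > pi / (\<gamma> * sqrt (1 - \<epsilon>))"
    moreover have "pi / (\<gamma> * sqrt (1 - \<epsilon>)) > 0" if "\<epsilon> < 1"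
      using that gpos by simp
    ultimately show "T > 0" by force
  qed simp
qed

end
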